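(* Let $K$ be a field of characteristic not equal to $2$ and let $S$ be a (unital, not necessarily associative) $K$-algebra equipped with a pseudo-degree function $\chi$. Let $a \in N(S)$ with $m=\chi(a)>0$, and suppose that the centralizer $C_S(a)$ satisfies condition $D(\ell)$ for some positive integer $\ell$. Then the subalgebra $K[a]$ of $S$ generated by $a$ is isomorphic to a polynomial ring in one variable over $K$, and $C_S(a)$ is a free left $K[a]$-module of rank at most $\ell m$.
   Context: All algebras are unital but not necessarily associative, and $K$ is embedded in $S$ via the unit. For $a,b,c\in S$, the nucleus $N(S)$ is the set of $a\in S$ such that $a(bc)=(ab)c$, $(ba)c=b(ac)$ and $(bc)a=b(ca)$ for all $b,c\in S$ (i.e. $a$ lies in the left, middle and right nuclei). The centralizer $C_S(a)$ is the set of elements of $S$ commuting with $a$. A pseudo-degree function on $S$ is a map $\chi:S\to\mathbb{Z}\cup\{-\infty\}$ such that $\chi(x)=-\infty$ iff $x=0$; $\chi(xy)=\chi(x)+\chi(y)$ for all $x,y\in S$; and $\chi(x+y)\le\max(\chi(x),\chi(y))$ for all $x,y\in S$. For $K$ of characteristic not $2$ and a positive integer $\ell$, a subalgebra $B\subseteq S$ satisfies condition $D(\ell)$ if $\chi(b)\ge 0$ for all nonzero $b\in B$, and whenever $b_1,\dots,b_{\ell+1}\in B$ all satisfy $\chi(b_1)=\dots=\chi(b_{\ell+1})$, there exist $\alpha_1,\dots,\alpha_{\ell+1}\in K$, not all zero, with $\chi\left(\sum_{i=1}^{\ell+1}\alpha_i b_i\right)<\chi(b_1)$. *)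

theory Defs
  imports "HOL-Computational_Algebra.Polynomial"
begin

definition nonassoc_algebra :: "('k::field \<Rightarrow> 's::{ab_group_add,times,one} \<Rightarrow> 's) \<Rightarrow> bool" where
  "nonassoc_algebra sc \<longleftrightarrow>
     Vector_Spaces.vector_space sc \<and>
     (\<forall>x y z::'s. (x + y) * z = x * z + y * z \<and> z * (x + y) = z * x + z * y) \<and>
     (\<forall>c x y. sc c (x * y) = sc c x * y \<and> sc c (x * y) = x * sc c y) \<and>
     (\<forall>x::'s. 1 * x = x \<and> x * 1 = x)"

definition nucleus :: "'s::times set" where
  "nucleus = {a. \<forall>b c. a * (b * c) = (a * b) * c \<and> (b * a) * c = b * (a * c)
                       \<and> (b * c) * a = b * (c * a)}"

definition centralizer :: "'s::times \<Rightarrow> 's set" where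
  "centralizer a = {x. x * a = a * x}"

text \<open>The value -\<infinity> at 0 is encoded by only
  constraining chi on nonzero elements (chi 0 is irrelevant); the conditions
  below are exactly the paper's conditions unfolded with -\<infinity> conventions.\<close>
definition pseudo_degree :: "('s::{zero,plus,times} \<Rightarrow> int) \<Rightarrow> bool" where
  "pseudo_degree chi \<longleftrightarrow>
     (\<forall>x y. x \<noteq> 0 \<longrightarrow> y \<noteq> 0 \<longrightarrow> x * y \<noteq> 0 \<and> chi (x * y) = chi x + chi y) \<and>
     (\<forall>x y. x \<noteq> 0 \<longrightarrow> y \<noteq> 0 \<longrightarrow> x + y \<noteq> 0 \<longrightarrow> chi (x + y) \<le> max (chi x) (chi y))"

definition cond_D :: "('k::field \<Rightarrow> 's::{ab_group_add,times,one} \<Rightarrow> 's) \<Rightarrow> ('s \<Rightarrow> int) \<Rightarrow> nat \<Rightarrow> 's set \<Rightarrow> bool" where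
  "cond_D sc chi l B \<longleftrightarrow>
     (\<forall>b\<in>B. b \<noteq> 0 \<longrightarrow> chi b \<ge> 0) \<and>
     (\<forall>bs::nat \<Rightarrow> 's. (\<forall>i\<le>l. bs i \<in> B \<and> bs i \<noteq> 0 \<and> chi (bs i) = chi (bs 0)) \<longrightarrow>
        (\<exists>\<alpha>::nat \<Rightarrow> 'k. (\<exists>i\<le>l. \<alpha> i \<noteq> 0) \<and>
           ((\<Sum>i\<le>l. sc (\<alpha> i) (bs i)) = 0 \<or> chi (\<Sum>i\<le>l. sc (\<alpha> i) (bs i)) < chi (bs 0))))"

definition subalgebra :: "('k::field \<Rightarrow> 's::{ab_group_add,times,one} \<Rightarrow> 's) \<Rightarrow> 's set \<Rightarrow> bool" where
  "subalgebra sc B \<longleftrightarrow> 1 \<in> B \<and> (\<forall>x\<in>B. \<forall>y\<in>B. x + y \<in> B \<and> x * y \<in> B) \<and> (\<forall>c. \<forall>x\<in>B. sc c x \<in> B)"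

definition gen_subalg :: "('k::field \<Rightarrow> 's::{ab_group_add,times,one} \<Rightarrow> 's) \<Rightarrow> 's \<Rightarrow> 's set" where
  "gen_subalg sc a = \<Inter>{B. subalgebra sc B \<and> a \<in> B}"

definition poly_alg_iso :: "('k::field \<Rightarrow> 's::{ab_group_add,times,one} \<Rightarrow> 's) \<Rightarrow> ('k poly \<Rightarrow> 's) \<Rightarrow> 's set \<Rightarrow> bool" where
  "poly_alg_iso sc f A \<longleftrightarrow> bij_betw f UNIV A \<and>
     (\<forall>p q. f (p + q) = f p + f q \<and> f (p * q) = f p * f q) \<and>
     (\<forall>c p. f (smult c p) = sc c (f p)) \<and> f 1 = 1"

definition left_basis :: "'s::{ab_group_add,times} set \<Rightarrow> 's set \<Rightarrow> 's set \<Rightarrow> bool" where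
  "left_basis R M E \<longleftrightarrow> finite E \<and> E \<subseteq> M \<and>
     (\<forall>c\<in>M. \<exists>!p. (\<forall>e\<in>E. p e \<in> R) \<and> (\<forall>e. e \<notin> E \<longrightarrow> p e = 0) \<and> c = (\<Sum>e\<in>E. p e * e))"

end

theory Submission
  imports Defs
begin

(*
  Call a set E in C(a) degree-orthogonal if the family a^i e (i >= 0, e in E) behaves like a
  graded basis: every nontrivial K-linear combination is nonzero and has the degree of its
  highest term. Members of E whose degrees agree modulo m = chi a can be shifted by powers of a
  to a common degree, so D(l) allows at most l of them in each residue class and card E <= l m.
  A maximal such E is built greedily, adding an element of C(a) of least degree outside the
  span of the a^i e; maximality forces that span to be all of C(a). Orthogonality of {1} makes
  evaluation K[x] -> K[a] injective, and orthogonality of E makes E a basis of C(a) over K[a].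
*)

lemma cond_D_degree_nonneg: "cond_D sc chi l B \<Longrightarrow> b \<in> B \<Longrightarrow> b \<noteq> 0 \<Longrightarrow> 0 \<le> chi b"
  unfolding cond_D_def by blast

lemma cond_D_dependent:
  assumes "cond_D sc chi l B"
    and "\<And>k. k \<le> l \<Longrightarrow> b k \<in> B \<and> b k \<noteq> 0 \<and> chi (b k) = chi (b 0)"
  obtains \<alpha> k0 where "k0 \<le> l" "\<alpha> k0 \<noteq> 0"
    "(\<Sum>k\<le>l. sc (\<alpha> k) (b k)) = 0 \<or> chi (\<Sum>k\<le>l. sc (\<alpha> k) (b k)) < chi (b 0)"
proof -
  from assms(1) have "\<forall>bs. (\<forall>k\<le>l. bs k \<in> B \<and> bs k \<noteq> 0 \<and> chi (bs k) = chi (bs 0)) \<longrightarrow>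
      (\<exists>\<alpha>. (\<exists>k\<le>l. \<alpha> k \<noteq> 0) \<and>
        ((\<Sum>k\<le>l. sc (\<alpha> k) (bs k)) = 0 \<or> chi (\<Sum>k\<le>l. sc (\<alpha> k) (bs k)) < chi (bs 0)))"
    unfolding cond_D_def by (rule conjunct2)
  from this[THEN spec, of b] assms(2) that show ?thesis
    by blast
qed

locale nonassoc_alg =
  fixes sc :: "'k::field \<Rightarrow> 's::{ab_group_add,times,one} \<Rightarrow> 's"
  assumes nonassoc_algebra: "nonassoc_algebra sc"
begin

sublocale vector_space sc
  using nonassoc_algebra by (simp add: nonassoc_algebra_def)

lemma distrib_right: "(x + y) * z = x * z + y * (z::'s)"
  using nonassoc_algebra by (simp add: nonassoc_algebra_def)

lemma distrib_left: "z * (x + y) = z * x + z * (y::'s)"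
  using nonassoc_algebra by (simp add: nonassoc_algebra_def)

lemma scale_mult_left: "sc c x * y = sc c (x * y)"
  using nonassoc_algebra by (simp add: nonassoc_algebra_def)

lemma scale_mult_right: "x * sc c y = sc c (x * y)"
  using nonassoc_algebra unfolding nonassoc_algebra_def by metis

lemma mult_1_left [simp]: "1 * x = (x::'s)"
  using nonassoc_algebra by (simp add: nonassoc_algebra_def)

lemma mult_1_right [simp]: "x * 1 = (x::'s)"
  using nonassoc_algebra by (simp add: nonassoc_algebra_def)

lemma mult_zero_left [simp]: "0 * x = (0::'s)"
  using distrib_right[of 0 0 x] by simp

lemma mult_zero_right [simp]: "x * 0 = (0::'s)"
  using distrib_left[of x 0 0] by simp

lemma minus_mult_left: "- x * y = - (x * y :: 's)"
proof -
  have "x * y + - x * y = 0"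
    using distrib_right[of x "- x" y] by simp
  then show ?thesis
    by (rule minus_unique[symmetric])
qed

lemma left_diff_distrib: "(x - y) * z = x * z - y * (z::'s)"
  by (simp only: diff_conv_add_uminus distrib_right minus_mult_left)

lemma sum_distrib_left: "y * sum g A = (\<Sum>i\<in>A. y * g i :: 's)"
  by (induction A rule: infinite_finite_induct) (simp_all add: distrib_left)

lemma sum_distrib_right: "sum g A * y = (\<Sum>i\<in>A. g i * y :: 's)"
  by (induction A rule: infinite_finite_induct) (simp_all add: distrib_right)

lemma in_span_if_diff_scale_in_span:
  assumes "x \<in> span S" "x - sc b c \<in> span S" "b \<noteq> 0"
  shows "c \<in> span S"
proof -
  have "sc (inverse b) (x - (x - sc b c)) \<in> span S"
    using assms(1,2) by (rule span_scale[OF span_diff])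
  with assms(3) show ?thesis
    by simp
qed

definition peval :: "'s \<Rightarrow> 'k poly \<Rightarrow> 's" where
  "peval a P = fold_coeffs (\<lambda>c s. sc c 1 + a * s) P 0"

lemma peval_0 [simp]: "peval a 0 = 0"
  by (simp add: peval_def)

lemma peval_pCons: "peval a (pCons c P) = sc c 1 + a * peval a P"
  by (cases "c = 0 \<and> P = 0") (auto simp: peval_def)

lemma peval_add: "peval a (P + Q) = peval a P + peval a Q"
proof (induction P arbitrary: Q)
  case (pCons c P)
  then show ?case
    by (cases Q) (simp add: peval_pCons distrib_left scale_left_distrib)
qed simp

lemma peval_diff: "peval a (P - Q) = peval a P - peval a Q"
  using peval_add[of a "P - Q" Q] by (simp add: eq_diff_eq)

lemma peval_smult: "peval a (smult c P) = sc c (peval a P)"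
  by (induction P) (simp_all add: peval_pCons scale_right_distrib scale_mult_right)

lemma peval_1 [simp]: "peval a 1 = 1"
  using peval_pCons[of a 1 0] by (simp add: one_pCons)

lemma peval_X: "peval a [:0, 1:] = a"
  by (simp add: peval_pCons)

lemma peval_sum: "peval a (sum g A) = (\<Sum>i\<in>A. peval a (g i))"
  by (induction A rule: infinite_finite_induct) (simp_all add: peval_add)

lemma peval_mult:
  assumes "\<And>b c. a * (b * c) = (a * b) * c"
  shows "peval a (P * Q) = peval a P * peval a Q"
proof (induction P)
  case (pCons c P)
  have "peval a (pCons c P * Q) = sc c (peval a Q) + a * (peval a P * peval a Q)"
    by (simp add: peval_add peval_smult peval_pCons pCons.IH)
  also have "\<dots> = peval a (pCons c P) * peval a Q"
    by (simp add: peval_pCons distrib_right scale_mult_left assms)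
  finally show ?case .
qed simp

primrec apow :: "'s \<Rightarrow> nat \<Rightarrow> 's" where
  "apow a 0 = 1"
| "apow a (Suc i) = a * apow a i"

lemma peval_monom: "peval a (monom c i) = sc c (apow a i)"
  by (induction i) (simp_all add: peval_pCons monom_0 monom_Suc scale_mult_right)

lemma peval_eq_sum_apow:
  assumes "degree P \<le> N"
  shows "peval a P = (\<Sum>i\<le>N. sc (coeff P i) (apow a i))"
  by (subst poly_as_sum_of_monoms'[OF assms, symmetric]) (simp add: peval_sum peval_monom)

lemma apow_add_mult:
  assumes "\<And>b c. a * (b * c) = (a * b) * c"
  shows "apow a i * (apow a j * x) = apow a (i + j) * x"
  by (induction i) (simp_all add: assms[symmetric])

lemma subalgebra_range_peval:
  assumes "\<And>b c. a * (b * c) = (a * b) * c"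
  shows "subalgebra sc (range (peval a))"
  unfolding subalgebra_def
proof (intro conjI ballI allI)
  show "1 \<in> range (peval a)"
    by (metis peval_1 rangeI)
  fix x y assume "x \<in> range (peval a)" "y \<in> range (peval a)"
  then obtain P Q where "x = peval a P" "y = peval a Q"
    by blast
  then show "x + y \<in> range (peval a)" "x * y \<in> range (peval a)"
    by (metis peval_add rangeI, metis peval_mult[OF assms] rangeI)
next
  fix c x assume "x \<in> range (peval a)"
  then show "sc c x \<in> range (peval a)"
    by (metis peval_smult rangeE rangeI)
qed

lemma peval_in_subalgebra:
  assumes "subalgebra sc B" and "a \<in> B"
  shows "peval a P \<in> B"
proof (induction P)
  case 0
  from assms(1) have "sc 0 1 \<in> B"
    unfolding subalgebra_def by blast
  then show ?case
    by simp
next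
  case (pCons c P)
  with assms show ?case
    by (simp add: peval_pCons subalgebra_def)
qed

lemma gen_subalg_eq_range_peval:
  assumes "\<And>b c. a * (b * c) = (a * b) * c"
  shows "gen_subalg sc a = range (peval a)"
proof
  show "gen_subalg sc a \<subseteq> range (peval a)"
    unfolding gen_subalg_def using subalgebra_range_peval[OF assms] peval_X
    by (metis (mono_tags, lifting) Inter_lower mem_Collect_eq rangeI)
  show "range (peval a) \<subseteq> gen_subalg sc a"
    unfolding gen_subalg_def using peval_in_subalgebra by blast
qed

lemma poly_alg_iso_peval:
  assumes "\<And>b c. a * (b * c) = (a * b) * c" and "inj (peval a)"
  shows "poly_alg_iso sc (peval a) (range (peval a))"
  using assms by (simp add: poly_alg_iso_def bij_betw_def peval_add peval_mult peval_smult)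

end

locale pseudo_degree_alg = nonassoc_alg sc
  for sc :: "'k::field \<Rightarrow> 's::{ab_group_add,times,one} \<Rightarrow> 's" +
  fixes chi :: "'s \<Rightarrow> int"
  assumes pseudo_degree: "pseudo_degree chi"
    and one_neq_zero: "(1::'s) \<noteq> 0"
    and degree_scalar_nonneg: "c \<noteq> 0 \<Longrightarrow> 0 \<le> chi (sc c 1)"
begin

lemma
  assumes "x \<noteq> 0" and "y \<noteq> 0"
  shows mult_neq_zero: "x * y \<noteq> 0" and degree_mult: "chi (x * y) = chi x + chi y"
  using pseudo_degree[unfolded pseudo_degree_def, THEN conjunct1, rule_format, OF assms]
  by simp_all

lemma degree_add_le:
  assumes "x \<noteq> 0" and "y \<noteq> 0" and "x + y \<noteq> 0"
  shows "chi (x + y) \<le> max (chi x) (chi y)"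
  using pseudo_degree[unfolded pseudo_degree_def, THEN conjunct2, rule_format, OF assms] .

lemma degree_one: "chi 1 = 0"
  using degree_mult[OF one_neq_zero one_neq_zero] by simp

lemma degree_scalar:
  assumes "c \<noteq> 0"
  shows "chi (sc c 1) = 0"
proof -
  have nonzero: "sc c 1 \<noteq> 0" "sc (inverse c) 1 \<noteq> 0"
    using assms one_neq_zero by simp_all
  have "chi (sc c 1) + chi (sc (inverse c) 1) = chi (sc c 1 * sc (inverse c) 1)"
    using degree_mult[OF nonzero] by simp
  also have "\<dots> = 0"
    using assms by (simp add: scale_mult_left scale_mult_right degree_one)
  finally have "chi (sc c 1) + chi (sc (inverse c) 1) = 0" .
  moreover have "0 \<le> chi (sc c 1)" "0 \<le> chi (sc (inverse c) 1)"
    using assms by (simp_all add: degree_scalar_nonneg)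
  ultimately show ?thesis
    by linarith
qed

lemma degree_scale:
  assumes "c \<noteq> 0" and "x \<noteq> 0"
  shows "chi (sc c x) = chi x"
proof -
  have "sc c x = sc c 1 * x"
    by (simp add: scale_mult_left)
  with assms show ?thesis
    by (simp add: degree_mult degree_scalar one_neq_zero)
qed

lemma degree_uminus: "x \<noteq> 0 \<Longrightarrow> chi (- x) = chi x"
  using degree_scale[of "- 1" x] by simp

lemma degree_add_dominant:
  assumes "x \<noteq> 0" and "y = 0 \<or> chi y < chi x"
  shows "x + y \<noteq> 0 \<and> chi (x + y) = chi x"
proof (cases "y = 0")
  case False
  with assms have less: "chi y < chi x"
    by simp
  have nonzero: "x + y \<noteq> 0"
  proof
    assume "x + y = 0"
    then have "x = - y"
      by (simp add: eq_neg_iff_add_eq_0)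
    with less degree_uminus[OF False] show False
      by simp
  qed
  have "chi (x + y) \<le> chi x"
    using degree_add_le[OF assms(1) False nonzero] less by simp
  moreover have "chi x \<le> max (chi (x + y)) (chi (- y))"
    using degree_add_le[of "x + y" "- y"] nonzero False assms(1) by simp
  ultimately show ?thesis
    using nonzero less degree_uminus[OF False] by auto
qed (use assms in simp)

lemma sum_degree_less:
  assumes "finite F" and "\<And>i. i \<in> F \<Longrightarrow> g i = 0 \<or> chi (g i) < M"
  shows "sum g F = 0 \<or> chi (sum g F) < M"
  using assms
proof (induction F rule: finite_induct)
  case (insert i F)
  then have "g i = 0 \<or> chi (g i) < M" and "sum g F = 0 \<or> chi (sum g F) < M"
    by simp_all
  then have "g i + sum g F = 0 \<or> chi (g i + sum g F) < M"
  proof (cases "g i = 0 \<or> sum g F = 0 \<or> g i + sum g F = 0")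
    case False
    with degree_add_le[of "g i" "sum g F"] \<open>g i = 0 \<or> chi (g i) < M\<close>
      \<open>sum g F = 0 \<or> chi (sum g F) < M\<close> show ?thesis
      by simp
  qed auto
  with insert.hyps show ?case
    by simp
qed simp

definition degree_orthogonal :: "('i \<Rightarrow> 's) \<Rightarrow> 'i set \<Rightarrow> bool" where
  "degree_orthogonal f I \<longleftrightarrow>
     (\<forall>F \<beta> i. finite F \<longrightarrow> F \<subseteq> I \<longrightarrow> i \<in> F \<longrightarrow> \<beta> i \<noteq> 0 \<longrightarrow>
        (\<Sum>j\<in>F. sc (\<beta> j) (f j)) \<noteq> 0 \<and> chi (f i) \<le> chi (\<Sum>j\<in>F. sc (\<beta> j) (f j)))"

lemma degree_orthogonalD:
  assumes "degree_orthogonal f I" "finite F" "F \<subseteq> I" "i \<in> F" "\<beta> i \<noteq> 0"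
  shows "(\<Sum>j\<in>F. sc (\<beta> j) (f j)) \<noteq> 0" and "chi (f i) \<le> chi (\<Sum>j\<in>F. sc (\<beta> j) (f j))"
  using assms(1)[unfolded degree_orthogonal_def, rule_format, where F = F and \<beta> = \<beta> and i = i,
      OF assms(2-5)]
  by simp_all

lemma degree_orthogonal_subset:
  "degree_orthogonal f I \<Longrightarrow> J \<subseteq> I \<Longrightarrow> degree_orthogonal f J"
  unfolding degree_orthogonal_def by (meson order.trans)

lemma degree_orthogonal_nonzero:
  assumes "degree_orthogonal f I" and "i \<in> I"
  shows "f i \<noteq> 0"
  using degree_orthogonalD(1)[OF assms(1), of "{i}" i "\<lambda>_. 1"] assms(2) by simp

lemma degree_orthogonal_independent:
  assumes "degree_orthogonal f I" "finite F" "F \<subseteq> I" "(\<Sum>j\<in>F. sc (\<beta> j) (f j)) = 0" "i \<in> F"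
  shows "\<beta> i = 0"
  using degree_orthogonalD(1)[OF assms(1-3,5)] assms(4) by blast

lemma degree_orthogonalI_homogeneous:
  fixes f :: "'i \<Rightarrow> 's"
  assumes nonzero: "\<And>i. i \<in> I \<Longrightarrow> f i \<noteq> 0"
    and homogeneous: "\<And>F \<beta> M. finite F \<Longrightarrow> F \<subseteq> I \<Longrightarrow> F \<noteq> {} \<Longrightarrow>
      (\<And>j. j \<in> F \<Longrightarrow> \<beta> j \<noteq> 0 \<and> chi (f j) = M) \<Longrightarrow>
      (\<Sum>j\<in>F. sc (\<beta> j) (f j)) \<noteq> 0 \<and> M \<le> chi (\<Sum>j\<in>F. sc (\<beta> j) (f j))"
  shows "degree_orthogonal f I"
  unfolding degree_orthogonal_def
proof (intro allI impI)
  fix F and \<beta> :: "'i \<Rightarrow> 'k" and i assume F: "finite F" "F \<subseteq> I" and i: "i \<in> F" "\<beta> i \<noteq> 0"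
  let ?t = "\<lambda>j. sc (\<beta> j) (f j)"
  define S where "S = {j\<in>F. \<beta> j \<noteq> 0}"
  define M where "M = Max ((\<lambda>j. chi (f j)) ` S)"
  define T where "T = {j\<in>S. chi (f j) = M}"
  have S: "finite S" "i \<in> S" "S \<subseteq> I"
    using F i by (auto simp: S_def)
  have le_M: "chi (f j) \<le> M" if "j \<in> S" for j
    using S that by (simp add: M_def)
  have "M \<in> (\<lambda>j. chi (f j)) ` S"
    unfolding M_def using S by (intro Max_in) auto
  then have T: "finite T" "T \<subseteq> I" "T \<noteq> {}"
    using S by (auto simp: T_def)
  have "(\<Sum>j\<in>F. ?t j) = (\<Sum>j\<in>S. ?t j)"
    using F by (intro sum.mono_neutral_right) (auto simp: S_def)
  also have "\<dots> = (\<Sum>j\<in>T. ?t j) + (\<Sum>j\<in>S - T. ?t j)"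
    using S by (subst sum.subset_diff[of T]) (auto simp: T_def)
  finally have split: "(\<Sum>j\<in>F. ?t j) = (\<Sum>j\<in>T. ?t j) + (\<Sum>j\<in>S - T. ?t j)" .
  have top: "(\<Sum>j\<in>T. ?t j) \<noteq> 0 \<and> M \<le> chi (\<Sum>j\<in>T. ?t j)"
    using T by (intro homogeneous) (auto simp: T_def S_def)
  have "(\<Sum>j\<in>S - T. ?t j) = 0 \<or> chi (\<Sum>j\<in>S - T. ?t j) < M"
  proof (rule sum_degree_less)
    fix j assume "j \<in> S - T"
    then have "\<beta> j \<noteq> 0" "f j \<noteq> 0" "chi (f j) < M"
      using le_M nonzero S by (auto simp: S_def T_def order.strict_iff_order)
    then show "?t j = 0 \<or> chi (?t j) < M"
      by (simp add: degree_scale)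
  qed (use S in simp)
  with top have "(\<Sum>j\<in>F. ?t j) \<noteq> 0 \<and> chi (\<Sum>j\<in>F. ?t j) = chi (\<Sum>j\<in>T. ?t j)"
    unfolding split by (intro degree_add_dominant) auto
  with top le_M[OF S(2)] show "(\<Sum>j\<in>F. ?t j) \<noteq> 0 \<and> chi (f i) \<le> chi (\<Sum>j\<in>F. ?t j)"
    by linarith
qed

lemma card_le_if_cond_D:
  assumes D: "cond_D sc chi l B" and orth: "degree_orthogonal f I"
    and F: "finite F" "F \<subseteq> I" "f ` F \<subseteq> B" and degree: "\<And>j. j \<in> F \<Longrightarrow> chi (f j) = d"
  shows "card F \<le> l"
proof (rule ccontr)
  assume "\<not> card F \<le> l"
  then have "Suc l \<le> card F"
    by simp
  then obtain F' where F': "F' \<subseteq> F" "card F' = Suc l" "finite F'"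
    by (rule obtain_subset_with_card_n)
  moreover have "{0..<card F'} = {..l}"
    using F'(2) by auto
  ultimately obtain g where g: "bij_betw g {..l} F'"
    using ex_bij_betw_nat_finite[of F'] by auto
  then have g_in: "g k \<in> F" if "k \<le> l" for k
    using that F'(1) g by (auto simp: bij_betw_def)
  have "f (g k) \<in> B \<and> f (g k) \<noteq> 0 \<and> chi (f (g k)) = chi (f (g 0))" if "k \<le> l" for k
    using that g_in F(2,3) degree degree_orthogonal_nonzero[OF orth]
    by (auto simp: image_subset_iff subset_iff)
  with D obtain \<alpha> k0 where k0: "k0 \<le> l" "\<alpha> k0 \<noteq> 0"
    and drop: "(\<Sum>k\<le>l. sc (\<alpha> k) (f (g k))) = 0 \<or>
      chi (\<Sum>k\<le>l. sc (\<alpha> k) (f (g k))) < chi (f (g 0))"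
    by (rule cond_D_dependent)
  define \<beta> where "\<beta> = \<alpha> \<circ> the_inv_into {..l} g"
  have \<beta>_g: "\<beta> (g k) = \<alpha> k" if "k \<le> l" for k
    using that g by (simp add: \<beta>_def bij_betw_def the_inv_into_f_f)
  have "(\<Sum>j\<in>F'. sc (\<beta> j) (f j)) = (\<Sum>k\<le>l. sc (\<beta> (g k)) (f (g k)))"
    using sum.reindex_bij_betw[OF g, of "\<lambda>j. sc (\<beta> j) (f j)"] by simp
  also have "\<dots> = (\<Sum>k\<le>l. sc (\<alpha> k) (f (g k)))"
    by (simp add: \<beta>_g)
  finally have sum_eq: "(\<Sum>j\<in>F'. sc (\<beta> j) (f j)) = (\<Sum>k\<le>l. sc (\<alpha> k) (f (g k)))" .
  have "F' \<subseteq> I" "g k0 \<in> F'" "\<beta> (g k0) \<noteq> 0"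
    using g k0 F'(1) F(2) \<beta>_g by (auto simp: bij_betw_def)
  note orthogonal = degree_orthogonalD[where \<beta> = \<beta>, OF orth F'(3) this]
  have "chi (f (g k0)) = chi (f (g 0))"
    using degree g_in k0(1) by simp
  with orthogonal drop show False
    unfolding sum_eq by linarith
qed

end

locale centralizer_D = nonassoc_alg sc
  for sc :: "'k::field \<Rightarrow> 's::{ab_group_add,times,one} \<Rightarrow> 's" +
  fixes chi :: "'s \<Rightarrow> int" and a :: 's and l :: nat
  assumes chi_pseudo_degree: "pseudo_degree chi"
    and a_nucleus: "a \<in> nucleus"
    and a_neq_zero: "a \<noteq> 0"
    and degree_a_pos: "0 < chi a"
    and centralizer_cond_D: "cond_D sc chi l (centralizer a)"
begin

lemma a_mult_assoc: "a * (b * c) = (a * b) * c"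
  and mult_a_assoc: "(b * a) * c = b * (a * c)"
  and mult_mult_a_assoc: "(b * c) * a = b * (c * a)"
  using a_nucleus by (simp_all add: nucleus_def)

lemma scalar_in_centralizer: "sc c 1 \<in> centralizer a"
  by (simp add: centralizer_def scale_mult_left scale_mult_right)

sublocale pseudo_degree_alg sc chi
proof
  show "pseudo_degree chi"
    by (rule chi_pseudo_degree)
  show "(1::'s) \<noteq> 0"
    using a_neq_zero by (metis mult_1_left mult_zero_left)
  then show "0 \<le> chi (sc c 1)" if "c \<noteq> 0" for c
    using that scalar_in_centralizer centralizer_cond_D by (simp add: cond_D_degree_nonneg)
qed

lemma degree_nonneg_centralizer: "x \<in> centralizer a \<Longrightarrow> x \<noteq> 0 \<Longrightarrow> 0 \<le> chi x"
  using centralizer_cond_D by (rule cond_D_degree_nonneg)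

lemma subspace_centralizer: "subspace (centralizer a)"
  unfolding subspace_def centralizer_def
  by (simp add: distrib_left distrib_right scale_mult_left scale_mult_right)

lemma peval_mult_centralizer:
  assumes "x \<in> centralizer a"
  shows "peval a P * x \<in> centralizer a"
proof -
  have commute: "peval a P * a = a * peval a P"
    using peval_mult[OF a_mult_assoc, of P "[:0, 1:]"] peval_mult[OF a_mult_assoc, of "[:0, 1:]" P]
    by (simp add: peval_X mult.commute)
  have "(peval a P * x) * a = peval a P * (a * x)"
    using assms by (simp add: centralizer_def mult_mult_a_assoc)
  also have "\<dots> = (a * peval a P) * x"
    by (simp add: mult_a_assoc flip: commute)
  also have "\<dots> = a * (peval a P * x)"
    by (simp add: a_mult_assoc)
  finally show ?thesis
    by (simp add: centralizer_def)
qed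

lemma apow_neq_zero: "apow a i \<noteq> 0"
  by (induction i) (simp_all add: one_neq_zero a_neq_zero mult_neq_zero)

lemma degree_apow: "chi (apow a i) = int i * chi a"
  by (induction i) (simp_all add: degree_one degree_mult apow_neq_zero a_neq_zero algebra_simps)

definition shift :: "nat \<times> 's \<Rightarrow> 's" where
  "shift x = apow a (fst x) * snd x"

lemma shift_0 [simp]: "shift (0, e) = e"
  by (simp add: shift_def)

lemma shift_neq_zero: "e \<noteq> 0 \<Longrightarrow> shift (i, e) \<noteq> 0"
  by (simp add: shift_def mult_neq_zero apow_neq_zero)

lemma degree_shift: "e \<noteq> 0 \<Longrightarrow> chi (shift (i, e)) = int i * chi a + chi e"
  by (simp add: shift_def degree_mult apow_neq_zero degree_apow)

lemma shift_in_centralizer: "e \<in> centralizer a \<Longrightarrow> shift (i, e) \<in> centralizer a"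
  unfolding shift_def using peval_mult_centralizer[of e "monom 1 i"] by (simp add: peval_monom)

lemma apow_mult_shift: "apow a i * shift (j, e) = shift (i + j, e)"
  by (simp add: shift_def apow_add_mult a_mult_assoc)

lemma card_residue_class_le:
  assumes "finite G" "G \<subseteq> centralizer a" "degree_orthogonal shift (UNIV \<times> G)"
    and residue: "\<And>e. e \<in> G \<Longrightarrow> chi e mod chi a = r"
  shows "card G \<le> l"
proof (cases "G = {}")
  case False
  define N where "N = Max (chi ` G)"
  define k where "k e = nat ((N - chi e) div chi a)" for e
  have nonzero: "e \<noteq> 0" if "e \<in> G" for e
    using degree_orthogonal_nonzero[OF assms(3), of "(0, e)"] that by simp
  have degree_k: "chi (shift (k e, e)) = N" if "e \<in> G" for e
  proof -
    have "N \<in> chi ` G"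
      using assms(1) False by (simp add: N_def)
    then obtain e' where "e' \<in> G" "chi e' = N"
      by blast
    then have "chi a dvd N - chi e"
      using residue that by (metis mod_eq_dvd_iff)
    moreover have "chi e \<le> N"
      using assms(1) that by (simp add: N_def)
    ultimately have "int (k e) * chi a = N - chi e"
      using degree_a_pos by (simp add: k_def div_int_pos_iff)
    then show ?thesis
      using degree_shift nonzero that by simp
  qed
  have "inj_on (\<lambda>e. (k e, e)) G"
    by (simp add: inj_on_def)
  then have "card G = card ((\<lambda>e. (k e, e)) ` G)"
    by (simp add: card_image)
  also have "\<dots> \<le> l"
    using assms(1,2) degree_k
    by (intro card_le_if_cond_D[OF centralizer_cond_D assms(3)]) (auto intro: shift_in_centralizer)
  finally show ?thesis .
qed simp

lemma card_le_degree_orthogonal: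
  assumes "finite E" "E \<subseteq> centralizer a" "degree_orthogonal shift (UNIV \<times> E)"
  shows "card E \<le> l * nat (chi a)"
proof -
  define A where "A r = {e \<in> E. chi e mod chi a = r}" for r
  have "E = (\<Union>r\<in>{0..<chi a}. A r)"
    using degree_a_pos by (auto simp: A_def)
  moreover have "card (\<Union>r\<in>{0..<chi a}. A r) = (\<Sum>r\<in>{0..<chi a}. card (A r))"
    using assms(1) by (intro card_UN_disjoint) (auto simp: A_def)
  ultimately have "card E = (\<Sum>r\<in>{0..<chi a}. card (A r))"
    by simp
  also have "\<dots> \<le> (\<Sum>r\<in>{0..<chi a}. l)"
  proof (rule sum_mono, rule card_residue_class_le)
    fix r
    show "finite (A r)" "A r \<subseteq> centralizer a"
      using assms(1,2) by (auto simp: A_def)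
    show "degree_orthogonal shift (UNIV \<times> A r)"
      using assms(3) by (rule degree_orthogonal_subset) (auto simp: A_def)
  qed (simp add: A_def)
  finally show ?thesis
    by (simp add: mult.commute)
qed

lemma index_le_if_degree_shift_eq:
  assumes "e \<noteq> 0" "c \<noteq> 0" "chi (shift (j, e)) = chi (shift (i, c))" "chi e \<le> chi c"
  shows "i \<le> j" and "e = c \<Longrightarrow> j = i"
proof -
  have degree_eq: "int j * chi a + chi e = int i * chi a + chi c"
    using assms(1-3) by (simp add: degree_shift)
  with assms(4) have "int i * chi a \<le> int j * chi a"
    by linarith
  with degree_a_pos show "i \<le> j"
    by (simp add: mult_le_cancel_right)
  show "j = i" if "e = c"
    using degree_eq that degree_a_pos by auto
qed

lemma homogeneous_sum_through_new_element:
  assumes E: "E \<subseteq> centralizer a" "degree_orthogonal shift (UNIV \<times> E)"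
    and c: "c \<in> centralizer a" "c \<notin> span (shift ` (UNIV \<times> E))"
    and degree_le: "\<And>e. e \<in> E \<Longrightarrow> chi e \<le> chi c"
    and below_in_span: "\<And>w. w \<in> centralizer a \<Longrightarrow> w \<noteq> 0 \<Longrightarrow> chi w < chi c \<Longrightarrow>
      w \<in> span (shift ` (UNIV \<times> E))"
    and F: "finite F" "F \<subseteq> UNIV \<times> insert c E" "(i, c) \<in> F"
    and homogeneous: "\<And>j. j \<in> F \<Longrightarrow> \<beta> j \<noteq> 0 \<and> chi (shift j) = M"
  shows "(\<Sum>j\<in>F. sc (\<beta> j) (shift j)) \<noteq> 0 \<and> M \<le> chi (\<Sum>j\<in>F. sc (\<beta> j) (shift j))"
proof (rule ccontr)
  assume small: "\<not> ?thesis"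
  have "c \<noteq> 0"
    using c(2) span_zero by auto
  have second: "snd j \<in> insert c E" "snd j \<noteq> 0" if "j \<in> F" for j
    using subsetD[OF F(2) that] degree_orthogonal_nonzero[OF E(2), of "(0, snd j)"] \<open>c \<noteq> 0\<close>
    by (auto simp: mem_Times_iff)
  \<comment> \<open>All terms have the degree of a^i c, so each is a multiple of a^i and only (i, c) involves c.\<close>
  have index: "i \<le> fst j" "snd j = c \<Longrightarrow> j = (i, c)" if "j \<in> F" for j
    using index_le_if_degree_shift_eq[of "snd j" c "fst j" i] second[OF that] \<open>c \<noteq> 0\<close>
      homogeneous[OF that] homogeneous[OF F(3)] degree_le
    by (cases j, fastforce)+
  define W where "W = (\<Sum>j\<in>F. sc (\<beta> j) (shift (fst j - i, snd j)))"
  have sum_eq: "(\<Sum>j\<in>F. sc (\<beta> j) (shift j)) = apow a i * W"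
    unfolding W_def sum_distrib_left
    by (intro sum.cong) (simp_all add: scale_mult_right apow_mult_shift index)
  have "W - sc (\<beta> (i, c)) c = (\<Sum>j\<in>F - {(i, c)}. sc (\<beta> j) (shift (fst j - i, snd j)))"
    unfolding W_def using F(1,3) by (simp add: sum.remove)
  also have "\<dots> \<in> span (shift ` (UNIV \<times> E))"
  proof (intro span_sum span_scale span_base)
    fix j assume "j \<in> F - {(i, c)}"
    then have "snd j \<in> E"
      using index(2)[of j] second(1)[of j] by auto
    then show "shift (fst j - i, snd j) \<in> shift ` (UNIV \<times> E)"
      by auto
  qed
  finally have rest_in_span: "W - sc (\<beta> (i, c)) c \<in> span (shift ` (UNIV \<times> E))" .
  have W_in_span: "W \<in> span (shift ` (UNIV \<times> E))"
  proof (cases "W = 0")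
    case False
    have "W \<in> centralizer a"
      unfolding W_def using second(1) E(1) c(1)
      by (intro subspace_sum[OF subspace_centralizer] subspace_scale[OF subspace_centralizer]
          shift_in_centralizer) blast
    have "chi (shift (i, c)) = M"
      using homogeneous[OF F(3)] by simp
    with small False have "int i * chi a + chi W < int i * chi a + chi c"
      by (simp add: sum_eq degree_shift \<open>c \<noteq> 0\<close> degree_mult apow_neq_zero degree_apow
          mult_neq_zero)
    with \<open>W \<in> centralizer a\<close> False show ?thesis
      using below_in_span by simp
  qed (simp add: span_zero)
  have "c \<in> span (shift ` (UNIV \<times> E))"
    using in_span_if_diff_scale_in_span[OF W_in_span rest_in_span] homogeneous[OF F(3)] by simp
  with c(2) show False ..
qed

lemma degree_orthogonal_insert:
  assumes E: "E \<subseteq> centralizer a" "degree_orthogonal shift (UNIV \<times> E)"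
    and c: "c \<in> centralizer a" "c \<notin> span (shift ` (UNIV \<times> E))"
    and degree_le: "\<And>e. e \<in> E \<Longrightarrow> chi e \<le> chi c"
    and below_in_span: "\<And>w. w \<in> centralizer a \<Longrightarrow> w \<noteq> 0 \<Longrightarrow> chi w < chi c \<Longrightarrow>
      w \<in> span (shift ` (UNIV \<times> E))"
  shows "degree_orthogonal shift (UNIV \<times> insert c E)"
proof (rule degree_orthogonalI_homogeneous)
  have "c \<noteq> 0"
    using c(2) span_zero by auto
  moreover have "e \<noteq> 0" if "e \<in> E" for e
    using degree_orthogonal_nonzero[OF E(2), of "(0, e)"] that by simp
  ultimately show "shift j \<noteq> 0" if "j \<in> UNIV \<times> insert c E" for j
    using that shift_neq_zero by (cases j) auto
  fix F and \<beta> :: "nat \<times> 's \<Rightarrow> 'k" and M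
  assume F: "finite F" "F \<subseteq> UNIV \<times> insert c E" "F \<noteq> {}"
    and homogeneous: "\<And>j. j \<in> F \<Longrightarrow> \<beta> j \<noteq> 0 \<and> chi (shift j) = M"
  show "(\<Sum>j\<in>F. sc (\<beta> j) (shift j)) \<noteq> 0 \<and> M \<le> chi (\<Sum>j\<in>F. sc (\<beta> j) (shift j))"
  proof (cases "\<exists>i. (i, c) \<in> F")
    case True
    then obtain i where "(i, c) \<in> F" ..
    with assms F(1,2) homogeneous show ?thesis
      by (intro homogeneous_sum_through_new_element) auto
  next
    case False
    with F(2) have "F \<subseteq> UNIV \<times> E"
      by auto
    moreover obtain j where "j \<in> F"
      using F(3) by blast
    ultimately show ?thesis
      using degree_orthogonalD[where \<beta> = \<beta>, OF E(2) F(1)] homogeneous by metis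
  qed
qed

text \<open>The last clause guarantees that an element of least degree outside the span has
  degree at least that of every member of E, as required by degree_orthogonal_insert.\<close>
definition admissible :: "'s set \<Rightarrow> bool" where
  "admissible E \<longleftrightarrow> finite E \<and> E \<subseteq> centralizer a \<and> degree_orthogonal shift (UNIV \<times> E) \<and>
     (\<forall>w\<in>centralizer a. w \<noteq> 0 \<longrightarrow> (\<exists>e\<in>E. chi w < chi e) \<longrightarrow> w \<in> span (shift ` (UNIV \<times> E)))"

lemma admissible_insert:
  assumes E: "admissible E"
    and c: "c \<in> centralizer a" "c \<notin> span (shift ` (UNIV \<times> E))"
    and least: "\<And>w. w \<in> centralizer a \<Longrightarrow> w \<notin> span (shift ` (UNIV \<times> E)) \<Longrightarrow> chi c \<le> chi w"
  shows "admissible (insert c E)"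
proof -
  have below_in_span: "w \<in> span (shift ` (UNIV \<times> E))"
    if "w \<in> centralizer a" "chi w < chi c" for w
    using least[OF that(1)] that(2) by force
  have degree_le: "chi e \<le> chi c" if "e \<in> E" for e
  proof (rule ccontr)
    assume "\<not> chi e \<le> chi c"
    with E that c(1) have "c \<in> span (shift ` (UNIV \<times> E))"
      unfolding admissible_def by (metis not_le span_zero)
    with c(2) show False ..
  qed
  have "span (shift ` (UNIV \<times> E)) \<subseteq> span (shift ` (UNIV \<times> insert c E))"
    by (intro span_mono) blast
  with E c degree_le below_in_span show ?thesis
    unfolding admissible_def
    by (auto intro!: degree_orthogonal_insert dest: degree_le)
qed

lemma exists_degree_orthogonal_spanning:
  obtains E where "finite E" "E \<subseteq> centralizer a" "degree_orthogonal shift (UNIV \<times> E)"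
    "centralizer a \<subseteq> span (shift ` (UNIV \<times> E))"
proof -
  have "admissible {}"
    by (simp add: admissible_def degree_orthogonal_def)
  moreover have "card E < Suc (l * nat (chi a))" if "admissible E" for E
    using that card_le_degree_orthogonal by (simp add: admissible_def less_Suc_eq_le)
  ultimately obtain E where E: "admissible E" and maximal: "\<And>E'. admissible E' \<Longrightarrow> card E' \<le> card E"
    using ex_has_greatest_nat[of admissible "{}" card] by blast
  have spanning: "centralizer a \<subseteq> span (shift ` (UNIV \<times> E))"
  proof (rule ccontr)
    assume "\<not> ?thesis"
    then obtain w where "w \<in> centralizer a - span (shift ` (UNIV \<times> E))"
      by blast
    \<comment> \<open>chi is nonnegative on the centralizer, so minimizing nat (chi w) minimizes chi w.\<close>
    then obtain c where c: "c \<in> centralizer a - span (shift ` (UNIV \<times> E))"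
      and least_nat: "\<And>w. w \<in> centralizer a - span (shift ` (UNIV \<times> E)) \<Longrightarrow> nat (chi c) \<le> nat (chi w)"
      using ex_has_least_nat[of "\<lambda>w. w \<in> centralizer a - span (shift ` (UNIV \<times> E))" w
          "\<lambda>w. nat (chi w)"] by blast
    have least: "chi c \<le> chi w" if "w \<in> centralizer a" "w \<notin> span (shift ` (UNIV \<times> E))" for w
    proof -
      have "w \<noteq> 0"
        using that(2) span_zero by auto
      then show ?thesis
        using least_nat[of w] that degree_nonneg_centralizer[OF that(1)] by simp
    qed
    have "admissible (insert c E)"
      using c by (intro admissible_insert[OF E _ _ least]) simp_all
    moreover have "c \<notin> E"
    proof
      assume "c \<in> E"
      then have "shift (0, c) \<in> shift ` (UNIV \<times> E)"
        by (intro imageI) simp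
      then have "shift (0, c) \<in> span (shift ` (UNIV \<times> E))"
        by (rule span_base)
      with c show False
        by simp
    qed
    ultimately show False
      using maximal[of "insert c E"] E by (simp add: admissible_def)
  qed
  with E show thesis
    unfolding admissible_def by (intro that) auto
qed

lemma degree_orthogonal_one: "degree_orthogonal shift (UNIV \<times> {1})"
proof -
  have "degree_orthogonal shift (UNIV \<times> insert 1 {})"
  proof (rule degree_orthogonal_insert)
    show "degree_orthogonal shift (UNIV \<times> {})"
      by (simp add: degree_orthogonal_def)
    show "1 \<in> centralizer a"
      by (simp add: centralizer_def)
    show "1 \<notin> span (shift ` (UNIV \<times> {}))"
      using one_neq_zero by simp
    show "w \<in> span (shift ` (UNIV \<times> {}))" if "w \<in> centralizer a" "w \<noteq> 0" "chi w < chi 1" for w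
      using degree_nonneg_centralizer[OF that(1,2)] that(3) degree_one by simp
  qed simp_all
  then show ?thesis
    by simp
qed

lemma peval_combination_eq_0:
  assumes "finite E" "degree_orthogonal shift (UNIV \<times> E)"
    and "(\<Sum>e\<in>E. peval a (P e) * e) = 0" "e \<in> E"
  shows "P e = 0"
proof (rule poly_eqI)
  fix i
  define N where "N = Max ((\<lambda>e. degree (P e)) ` E)"
  have degree_le: "degree (P x) \<le> N" if "x \<in> E" for x
    using assms(1) that by (simp add: N_def)
  have "peval a (P x) * x = (\<Sum>i\<le>N. sc (coeff (P x) i) (shift (i, x)))" if "x \<in> E" for x
    using peval_eq_sum_apow[OF degree_le[OF that]]
    by (simp add: sum_distrib_right scale_mult_left shift_def)
  then have "(\<Sum>x\<in>E. peval a (P x) * x) = (\<Sum>x\<in>E. \<Sum>i\<le>N. sc (coeff (P x) i) (shift (i, x)))"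
    by (rule sum.cong[OF refl])
  also have "\<dots> = (\<Sum>j\<in>{..N} \<times> E. sc (coeff (P (snd j)) (fst j)) (shift j))"
    by (subst sum.swap) (simp add: sum.cartesian_product split_def)
  finally have "(\<Sum>j\<in>{..N} \<times> E. sc (coeff (P (snd j)) (fst j)) (shift j)) = 0"
    using assms(3) by simp
  then have "coeff (P e) i = 0" if "i \<le> N"
    using degree_orthogonal_independent[OF assms(2), of "{..N} \<times> E" "\<lambda>j. coeff (P (snd j)) (fst j)" "(i, e)"]
      assms(1,4) that by auto
  then show "coeff (P e) i = coeff 0 i"
    using degree_le[OF assms(4)] coeff_eq_0[of "P e" i] by (cases "i \<le> N") auto
qed

lemma inj_peval: "inj (peval a)"
proof (rule injI)
  fix P Q assume "peval a P = peval a Q"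
  then have "(\<Sum>e\<in>{1}. peval a (P - Q) * e) = 0"
    by (simp add: peval_diff)
  then show "P = Q"
    using peval_combination_eq_0[OF _ degree_orthogonal_one, of "\<lambda>_. P - Q"] by simp
qed

lemma span_shift_subset_combinations:
  assumes "finite E"
  shows "span (shift ` (UNIV \<times> E)) \<subseteq> range (\<lambda>P. \<Sum>e\<in>E. peval a (P e) * e)"
proof (rule span_minimal)
  show "shift ` (UNIV \<times> E) \<subseteq> range (\<lambda>P. \<Sum>e\<in>E. peval a (P e) * e)"
  proof (rule image_subsetI)
    fix x :: "nat \<times> 's" assume "x \<in> UNIV \<times> E"
    then obtain i e where x: "x = (i, e)" "e \<in> E"
      by auto
    define P :: "'s \<Rightarrow> 'k poly" where "P y = (if y = e then monom 1 i else 0)" for y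
    have "(\<Sum>y\<in>E. peval a (P y) * y) = (\<Sum>y\<in>E. if y = e then peval a (monom 1 i) * y else 0)"
      by (rule sum.cong) (simp_all add: P_def)
    also have "\<dots> = peval a (monom 1 i) * e"
      using assms x(2) by simp
    also have "\<dots> = shift x"
      unfolding x(1) shift_def peval_monom by simp
    finally show "shift x \<in> range (\<lambda>P. \<Sum>e\<in>E. peval a (P e) * e)"
      by (intro range_eqI[where x = P]) simp
  qed
  show "subspace (range (\<lambda>P. \<Sum>e\<in>E. peval a (P e) * e))"
  proof (rule subspaceI)
    show "0 \<in> range (\<lambda>P. \<Sum>e\<in>E. peval a (P e) * e)"
      by (rule range_eqI[of _ _ "\<lambda>_. 0"]) simp
  next
    fix x y assume "x \<in> range (\<lambda>P. \<Sum>e\<in>E. peval a (P e) * e)"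
      "y \<in> range (\<lambda>P. \<Sum>e\<in>E. peval a (P e) * e)"
    then obtain P Q where "x = (\<Sum>e\<in>E. peval a (P e) * e)" "y = (\<Sum>e\<in>E. peval a (Q e) * e)"
      by blast
    then show "x + y \<in> range (\<lambda>P. \<Sum>e\<in>E. peval a (P e) * e)"
      by (intro range_eqI[of _ _ "\<lambda>e. P e + Q e"]) (simp add: peval_add distrib_right sum.distrib)
  next
    fix k x assume "x \<in> range (\<lambda>P. \<Sum>e\<in>E. peval a (P e) * e)"
    then obtain P where "x = (\<Sum>e\<in>E. peval a (P e) * e)"
      by blast
    then show "sc k x \<in> range (\<lambda>P. \<Sum>e\<in>E. peval a (P e) * e)"
      by (intro range_eqI[of _ _ "\<lambda>e. smult k (P e)"])
        (simp add: peval_smult scale_sum_right scale_mult_left)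
  qed
qed

lemma range_peval_coordinates_unique:
  assumes E: "finite E" "degree_orthogonal shift (UNIV \<times> E)"
    and p: "\<forall>e\<in>E. p e \<in> range (peval a)" and q: "\<forall>e\<in>E. q e \<in> range (peval a)"
    and "(\<Sum>e\<in>E. p e * e) = (\<Sum>e\<in>E. q e * e)" and "e \<in> E"
  shows "p e = q e"
proof -
  from p have "\<exists>P. \<forall>e\<in>E. p e = peval a (P e)"
    by (intro bchoice) (simp add: image_iff)
  then obtain P where P: "\<forall>e\<in>E. p e = peval a (P e)" ..
  from q have "\<exists>Q. \<forall>e\<in>E. q e = peval a (Q e)"
    by (intro bchoice) (simp add: image_iff)
  then obtain Q where Q: "\<forall>e\<in>E. q e = peval a (Q e)" ..
  have "(\<Sum>e\<in>E. peval a (P e - Q e) * e) = (\<Sum>e\<in>E. p e * e - q e * e)"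
    using P Q by (simp add: peval_diff left_diff_distrib)
  also have "\<dots> = 0"
    using assms(5) by (simp add: sum_subtractf)
  finally have "P e - Q e = 0"
    using peval_combination_eq_0[where P = "\<lambda>e. P e - Q e", OF E _ \<open>e \<in> E\<close>] by simp
  with P Q \<open>e \<in> E\<close> show ?thesis
    by simp
qed

lemma exists_left_basis:
  obtains E where "left_basis (range (peval a)) (centralizer a) E" "card E \<le> l * nat (chi a)"
proof -
  obtain E where E: "finite E" "E \<subseteq> centralizer a" "degree_orthogonal shift (UNIV \<times> E)"
    and spanning: "centralizer a \<subseteq> span (shift ` (UNIV \<times> E))"
    by (rule exists_degree_orthogonal_spanning)
  have "\<exists>!p. (\<forall>e\<in>E. p e \<in> range (peval a)) \<and> (\<forall>e. e \<notin> E \<longrightarrow> p e = 0) \<and> x = (\<Sum>e\<in>E. p e * e)"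
    if "x \<in> centralizer a" for x
  proof -
    from that spanning span_shift_subset_combinations[OF E(1)]
    obtain P where P: "x = (\<Sum>e\<in>E. peval a (P e) * e)"
      by blast
    define p where "p e = (if e \<in> E then peval a (P e) else 0)" for e
    have p: "(\<forall>e\<in>E. p e \<in> range (peval a)) \<and> (\<forall>e. e \<notin> E \<longrightarrow> p e = 0) \<and> x = (\<Sum>e\<in>E. p e * e)"
      using P by (auto simp: p_def cong: sum.cong)
    show ?thesis
    proof (rule ex1I[of _ p])
      fix q assume q: "(\<forall>e\<in>E. q e \<in> range (peval a)) \<and> (\<forall>e. e \<notin> E \<longrightarrow> q e = 0) \<and>
        x = (\<Sum>e\<in>E. q e * e)"
      show "q = p"
      proof
        fix e
        show "q e = p e"
          using range_peval_coordinates_unique[OF E(1,3), of q p e] q p by (cases "e \<in> E") auto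
      qed
    qed (fact p)
  qed
  with E(1,2) have "left_basis (range (peval a)) (centralizer a) E"
    unfolding left_basis_def by blast
  from this card_le_degree_orthogonal[OF E] show thesis
    by (rule that)
qed

end

theorem theorem2p8:
  fixes sc :: "'k::field \<Rightarrow> 's::{ab_group_add,times,one} \<Rightarrow> 's"
    and chi :: "'s \<Rightarrow> int" and a :: 's and l :: nat
  assumes "(2::'k) \<noteq> 0"
    and "nonassoc_algebra sc"
    and "pseudo_degree chi"
    and "a \<in> nucleus"
    and "a \<noteq> 0" and "chi a > 0"
    and "l > 0"
    and "cond_D sc chi l (centralizer a)"
  shows "(\<exists>f. poly_alg_iso sc f (gen_subalg sc a)) \<and>
         (\<forall>p\<in>gen_subalg sc a. \<forall>c\<in>centralizer a. p * c \<in> centralizer a) \<and>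
         (\<exists>E. left_basis (gen_subalg sc a) (centralizer a) E \<and> int (card E) \<le> int l * chi a)"
proof -
  interpret centralizer_D sc chi a l
    using assms by (simp add: centralizer_D_def centralizer_D_axioms_def nonassoc_alg_def)
  have K_a: "gen_subalg sc a = range (peval a)"
    using a_mult_assoc by (rule gen_subalg_eq_range_peval)
  obtain E where basis: "left_basis (range (peval a)) (centralizer a) E"
    and "card E \<le> l * nat (chi a)"
    by (rule exists_left_basis)
  then have "int (card E) \<le> int l * chi a"
    using degree_a_pos by (metis of_nat_mono of_nat_mult int_nat_eq less_imp_le)
  moreover have "\<forall>p\<in>range (peval a). \<forall>c\<in>centralizer a. p * c \<in> centralizer a"
    using peval_mult_centralizer by auto
  ultimately show ?thesis
    using poly_alg_iso_peval[OF a_mult_assoc inj_peval] basis unfolding K_a by blast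
qed

end
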